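(* Let Assumptions 1 and 2 (stated in the context) hold. Then for every increasing, continuously differentiable function $h$ on $[0,1]$, $$\int_{x_1}^{x_2}|h(x)|\,dx\ \le\ C_2\int_0^1|(Th)(w)|\,dw,$$ where $C_2=1/c_p$ and $c_p=\frac{c_Wc_f}{2}\min\{1-w_2,w_1\}\min\{(C_F-1)/2,\,1\}$.
   Context: Let $(X,W)$ be a random pair with values in $[0,1]^2$; $F_{X|W}(x|w)$, $f_{X|W}(x|w)$, $f_{X,W}$, $f_W$ denote the conditional distribution function of $X$ given $W=w$, the conditional density, the joint density and the marginal density of $W$. Fix constants $0\le x_1<\tilde x_1<\tilde x_2<x_2\le1$ and $0<w_1<w_2<1$. "Increasing" means non-decreasing and "decreasing" means non-increasing. Assumption 1 (Monotone IV): (a) for all $x,w',w''\in(0,1)$ with $w'\le w''$, $F_{X|W}(x|w')\ge F_{X|W}(x|w'')$; (b) there is a constant $C_F>1$ such that $F_{X|W}(x|w_1)\ge C_F F_{X|W}(x|w_2)$ for all $x\in(0,x_2)$, and $C_F(1-F_{X|W}(x|w_1))\le 1-F_{X|W}(x|w_2)$ for all $x\in(x_1,1)$. Assumption 2 (Density): (i) $(X,W)$ has a density $f_{X,W}$ with respect to Lebesgue measure on $[0,1]^2$ with $\int_0^1\int_0^1 f_{X,W}(x,w)^2\,dx\,dw\le C_T$ for a finite constant $C_T$; (ii) there is $c_f>0$ with $f_{X|W}(x|w)\ge c_f$ for all $x\in[x_1,x_2]$ and $w\in\{w_1,w_2\}$; (iii) there are constants $0<c_W\le C_W<\infty$ with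 $c_W\le f_W(w)\le C_W$ for all $w\in[0,1]$. The operator $T$ is $(Th)(w)=E[h(X)\mid W=w]f_W(w)=\int_0^1 h(x)f_{X,W}(x,w)\,dx$. *)

theory Defs
  imports "HOL-Analysis.Analysis"
begin

text \<open>The random pair (X,W) is described through its joint density
  f :: real \<times> real \<Rightarrow> real on [0,1]^2 (first coordinate x, second w).\<close>

definition fW :: "(real \<times> real \<Rightarrow> real) \<Rightarrow> real \<Rightarrow> real" where
  "fW f w = (\<integral>x\<in>{0..1}. f (x, w) \<partial>lborel)"

definition FXW :: "(real \<times> real \<Rightarrow> real) \<Rightarrow> real \<Rightarrow> real \<Rightarrow> real" where
  "FXW f x w = (\<integral>t\<in>{0..x}. f (t, w) \<partial>lborel) / fW f w"

definition fXW :: "(real \<times> real \<Rightarrow> real) \<Rightarrow> real \<Rightarrow> real \<Rightarrow> real" where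
  "fXW f x w = f (x, w) / fW f w"

definition Top :: "(real \<times> real \<Rightarrow> real) \<Rightarrow> (real \<Rightarrow> real) \<Rightarrow> real \<Rightarrow> real" where
  "Top f h w = (\<integral>x\<in>{0..1}. h x * f (x, w) \<partial>lborel)"

end

theory Submission
  imports Defs
begin

(*
  Let g(w) = E[h(X) | W = w] = (T h)(w) / f_W(w). Integrating h' against the conditional
  distribution (Fubini) gives, for every reference point a,
    g(w) = h(a) + \<integral>_a^1 h'(t) (1 - F(t|w)) dt - \<integral>_0^a h'(t) F(t|w) dt.
  As h' \<ge> 0, Assumption 1(a) makes g increasing, while Assumption 1(b) makes the first integral
  grow by the factor C_F from w1 to w2 and the second shrink by C_F. The two integrals are the
  conditional means of (h(X) - h(a))^+ and (h(a) - h(X))^+, which by the lower bound on f_{X|W}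
  dominate c_f times the corresponding integrals over [x1, x2]. Taking a at a sign change of h
  gives c_f (C_F - 1) \<integral>_{x1}^{x2} |h| \<le> C_F (g(w1)^- + g(w2)^+). Finally g \<le> g(w1) on (0, w1]
  and g \<ge> g(w2) on [w2, 1), so together with f_W \<ge> c_W the integral of |T h| is at least
  c_W (w1 g(w1)^- + (1 - w2) g(w2)^+).
*)

lemma integrable_mult_section_integral:
  fixes g k :: "real \<Rightarrow> real" and S :: "(real \<times> real) set"
  assumes S: "S \<in> sets borel" and g: "integrable lborel g" and k: "integrable lborel k"
    and k_nonneg: "\<And>x. 0 \<le> k x"
  shows "integrable lborel (\<lambda>t. g t * (\<integral>x. indicator S (t, x) * k x \<partial>lborel))"
proof (rule Bochner_Integration.integrable_bound[where f = "\<lambda>t. g t * (\<integral>x. k x \<partial>lborel)"])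
  have [measurable]: "g \<in> borel_measurable borel" "k \<in> borel_measurable borel"
    using g k by auto
  have [measurable]: "S \<in> sets (lborel \<Otimes>\<^sub>M lborel)"
    using S by (subst lborel_prod) simp
  show "integrable lborel (\<lambda>t. g t * (\<integral>x. k x \<partial>lborel))"
    using g by simp
  have "(\<lambda>(t, x). indicator S (t, x) * k x) \<in> borel_measurable (lborel \<Otimes>\<^sub>M lborel)"
    by measurable
  then show "(\<lambda>t. g t * (\<integral>x. indicator S (t, x) * k x \<partial>lborel)) \<in> borel_measurable lborel"
    using lborel.borel_measurable_lebesgue_integral[of "\<lambda>t x. indicator S (t, x) * k x" lborel]
    by simp
  show "AE t in lborel. norm (g t * (\<integral>x. indicator S (t, x) * k x \<partial>lborel))
                        \<le> norm (g t * (\<integral>x. k x \<partial>lborel))"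
  proof (intro AE_I2)
    fix t
    have "{x. (t, x) \<in> S} \<in> sets lborel"
      using S by measurable
    then have "integrable lborel (\<lambda>x. indicator {x. (t, x) \<in> S} x *\<^sub>R k x)"
      using k by (rule integrable_mult_indicator)
    then have "(\<integral>x. indicator S (t, x) * k x \<partial>lborel) \<le> (\<integral>x. k x \<partial>lborel)"
      using k k_nonneg
      by (intro Bochner_Integration.integral_mono) (auto simp: indicator_def)
    moreover have "0 \<le> (\<integral>x. indicator S (t, x) * k x \<partial>lborel)"
      using k_nonneg by (intro Bochner_Integration.integral_nonneg) auto
    ultimately show "norm (g t * (\<integral>x. indicator S (t, x) * k x \<partial>lborel))
                     \<le> norm (g t * (\<integral>x. k x \<partial>lborel))"
      by (simp add: abs_mult mult_left_mono)
  qed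
qed

lemma integral_swap_region:
  fixes g k :: "real \<Rightarrow> real" and S :: "(real \<times> real) set"
  assumes S: "S \<in> sets borel" and g: "integrable lborel g" and k: "integrable lborel k"
    and g_nonneg: "\<And>t. 0 \<le> g t" and k_nonneg: "\<And>x. 0 \<le> k x"
  shows "(\<integral>x. (\<integral>t. indicator S (t, x) * g t \<partial>lborel) * k x \<partial>lborel)
       = (\<integral>t. g t * (\<integral>x. indicator S (t, x) * k x \<partial>lborel) \<partial>lborel)"
proof -
  have [measurable]: "g \<in> borel_measurable borel" "k \<in> borel_measurable borel"
    using g k by auto
  have [measurable]: "S \<in> sets (lborel \<Otimes>\<^sub>M lborel)"
    using S by (subst lborel_prod) simp
  let ?F = "\<lambda>(t, x). indicator S (t, x) * g t * k x"
  have inner: "(\<integral>x. indicator S (t, x) * g t * k x \<partial>lborel)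
      = g t * (\<integral>x. indicator S (t, x) * k x \<partial>lborel)" for t
  proof -
    have "(\<integral>x. indicator S (t, x) * g t * k x \<partial>lborel)
        = (\<integral>x. g t * (indicator S (t, x) * k x) \<partial>lborel)"
      by (simp add: ac_simps)
    then show ?thesis
      by (simp only: integral_mult_right_zero)
  qed
  have "integrable (lborel \<Otimes>\<^sub>M lborel) ?F"
  proof (rule lborel_pair.Fubini_integrable)
    show "?F \<in> borel_measurable (lborel \<Otimes>\<^sub>M lborel)"
      by measurable
    have "(\<lambda>t. \<integral>x. norm (?F (t, x)) \<partial>lborel) = (\<lambda>t. \<integral>x. ?F (t, x) \<partial>lborel)"
      using g_nonneg k_nonneg by (intro ext Bochner_Integration.integral_cong) auto
    then show "integrable lborel (\<lambda>t. \<integral>x. norm (?F (t, x)) \<partial>lborel)"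
      using integrable_mult_section_integral[OF S g k k_nonneg] by (simp add: inner)
    show "AE t in lborel. integrable lborel (\<lambda>x. ?F (t, x))"
    proof (intro AE_I2)
      fix t
      have "{x. (t, x) \<in> S} \<in> sets lborel"
        using S by measurable
      then have "integrable lborel (\<lambda>x. indicator {x. (t, x) \<in> S} x *\<^sub>R (g t * k x))"
        using k by (intro integrable_mult_indicator) auto
      then show "integrable lborel (\<lambda>x. ?F (t, x))"
        by (simp add: indicator_def ac_simps cong: if_cong)
    qed
  qed
  then have "(\<integral>x. (\<integral>t. ?F (t, x) \<partial>lborel) \<partial>lborel) = (\<integral>t. (\<integral>x. ?F (t, x) \<partial>lborel) \<partial>lborel)"
    using lborel_pair.Fubini_integral[of "\<lambda>t x. indicator S (t, x) * g t * k x"] by simp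
  moreover have "(\<integral>t. indicator S (t, x) * g t * k x \<partial>lborel)
      = (\<integral>t. indicator S (t, x) * g t \<partial>lborel) * k x" for x
    by (rule integral_mult_left_zero)
  ultimately show ?thesis
    by (simp add: inner)
qed

definition derivative_on :: "real set \<Rightarrow> (real \<Rightarrow> real) \<Rightarrow> real \<Rightarrow> real" where
  "derivative_on S h t = (if t \<in> S then vector_derivative h (at t) else 0)"

context
  fixes h :: "real \<Rightarrow> real" and l u :: real
  assumes C1: "h C1_differentiable_on {l..u}"
begin

lemma has_real_derivative_derivative_on:
  "t \<in> {l..u} \<Longrightarrow> (h has_real_derivative derivative_on {l..u} h t) (at t)"
  using C1 by (auto simp: C1_differentiable_on_eq derivative_on_def
      has_real_derivative_iff_has_vector_derivative vector_derivative_works)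

lemma continuous_on_derivative_on: "continuous_on {l..u} (derivative_on {l..u} h)"
  using C1 unfolding C1_differentiable_on_eq
  by (elim conjE continuous_on_eq) (simp add: derivative_on_def)

lemma integrable_derivative_on: "integrable lborel (derivative_on {l..u} h)"
proof -
  have "integrable lborel (\<lambda>t. indicator {l..u} t *\<^sub>R derivative_on {l..u} h t)"
    using borel_integrable_atLeastAtMost'[OF continuous_on_derivative_on]
    by (simp add: set_integrable_def)
  moreover have "derivative_on {l..u} h = (\<lambda>t. indicator {l..u} t *\<^sub>R derivative_on {l..u} h t)"
    by (auto simp: fun_eq_iff derivative_on_def)
  ultimately show ?thesis
    by simp
qed

lemma integrable_indicator_derivative_on:
  "A \<in> sets borel \<Longrightarrow> integrable lborel (\<lambda>t. indicator A t * derivative_on {l..u} h t)"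
  using integrable_mult_indicator[OF _ integrable_derivative_on, of A] by simp

lemma integral_derivative_on:
  assumes "l \<le> a" "a \<le> x" "x \<le> u"
  shows "(\<integral>t. indicator {a..x} t * derivative_on {l..u} h t \<partial>lborel) = h x - h a"
proof -
  have "continuous_on {a..x} (derivative_on {l..u} h)"
    using assms by (intro continuous_on_subset[OF continuous_on_derivative_on]) auto
  moreover have "(h has_vector_derivative derivative_on {l..u} h y) (at y within {a..x})"
    if "a \<le> y" "y \<le> x" for y
    using has_real_derivative_derivative_on[of y] that assms
    by (auto simp: has_real_derivative_iff_has_vector_derivative
        intro: has_vector_derivative_at_within)
  ultimately show ?thesis
    using integral_FTC_atLeastAtMost[OF \<open>a \<le> x\<close>, of h "derivative_on {l..u} h"] by simp
qed

context
  assumes mono: "mono_on {l..u} h" and nontrivial: "l < u"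
begin

lemma derivative_on_nonneg: "0 \<le> derivative_on {l..u} h t"
proof (cases "t \<in> {l..u}")
  case True
  have "0 \<le> derivative_on {l..u} h s" if "s \<in> {l<..<u}" for s
    using mono_on_imp_deriv_nonneg[OF mono has_real_derivative_derivative_on] that by auto
  then show ?thesis
    using continuous_ge_on_closure[of "{l<..<u}" "derivative_on {l..u} h" t 0]
      continuous_on_derivative_on True nontrivial by simp
next
  case False
  then show ?thesis
    by (auto simp: derivative_on_def)
qed

lemma integral_derivative_on_pos_part:
  assumes "a \<in> {l..u}" "x \<in> {l..u}"
  shows "(\<integral>t. indicator {a..x} t * derivative_on {l..u} h t \<partial>lborel) = max (h x - h a) 0"
proof (cases "a \<le> x")
  case True
  then show ?thesis
    using integral_derivative_on[of a x] mono_onD[OF mono, of a x] assms by auto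
next
  case False
  then show ?thesis
    using mono_onD[OF mono, of x a] assms by auto
qed

end

end

context
  fixes h p :: "real \<Rightarrow> real" and l u a :: real
  assumes mono: "mono_on {l..u} h" and C1: "h C1_differentiable_on {l..u}" and "l < u"
    and p_nonneg: "\<And>x. 0 \<le> p x" and p: "integrable lborel (\<lambda>x. indicator {l..u} x * p x)"
    and a: "a \<in> {l..u}"
begin

lemma integral_pos_part_eq_integral_derivative_upper_tail:
  shows "(\<integral>x. indicator {l..u} x * (max (h x - h a) 0 * p x) \<partial>lborel)
      = (\<integral>t. indicator {a..u} t * (derivative_on {l..u} h t
          * (\<integral>x. indicator {t..u} x * p x \<partial>lborel)) \<partial>lborel)" (is "?lhs = integral\<^sup>L lborel ?F")
    and "integrable lborel (\<lambda>t. indicator {a..u} t * (derivative_on {l..u} h t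
          * (\<integral>x. indicator {t..u} x * p x \<partial>lborel)))"
proof -
  let ?S = "{z :: real \<times> real. fst z \<le> snd z}"
  have "?S \<in> sets borel"
    by (intro borel_closed closed_Collect_le continuous_intros)
  let ?g = "\<lambda>t. indicator {a..u} t * derivative_on {l..u} h t"
  let ?k = "\<lambda>x. indicator {l..u} x * p x"
  have lhs: "indicator {l..u} x * (max (h x - h a) 0 * p x)
      = (\<integral>t. indicator ?S (t, x) * ?g t \<partial>lborel) * ?k x" for x
  proof (cases "x \<in> {l..u}")
    case True
    have "(\<integral>t. indicator ?S (t, x) * ?g t \<partial>lborel)
        = (\<integral>t. indicator {a..x} t * derivative_on {l..u} h t \<partial>lborel)"
      using True by (intro Bochner_Integration.integral_cong) (auto simp: indicator_def)
    then show ?thesis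
      using integral_derivative_on_pos_part[OF C1 mono \<open>l < u\<close> a True] True by simp
  qed simp
  have rhs: "?F t = ?g t * (\<integral>x. indicator ?S (t, x) * ?k x \<partial>lborel)" for t
  proof (cases "t \<in> {a..u}")
    case True
    then have "(\<integral>x. indicator ?S (t, x) * ?k x \<partial>lborel) = (\<integral>x. indicator {t..u} x * p x \<partial>lborel)"
      using a by (intro Bochner_Integration.integral_cong) (auto simp: indicator_def)
    then show ?thesis
      by simp
  qed simp
  have g_nonneg: "0 \<le> ?g t" for t
    using derivative_on_nonneg[OF C1 mono \<open>l < u\<close>] by simp
  show "?lhs = integral\<^sup>L lborel ?F"
    unfolding lhs rhs using g_nonneg p_nonneg
    by (intro integral_swap_region \<open>?S \<in> sets borel\<close> integrable_indicator_derivative_on[OF C1] p)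
      auto
  show "integrable lborel ?F"
    unfolding rhs using p_nonneg
    by (intro integrable_mult_section_integral \<open>?S \<in> sets borel\<close>
        integrable_indicator_derivative_on[OF C1] p) auto
qed

lemma integral_neg_part_eq_integral_derivative_lower_tail:
  shows "(\<integral>x. indicator {l..u} x * (max (h a - h x) 0 * p x) \<partial>lborel)
      = (\<integral>t. indicator {l..a} t * (derivative_on {l..u} h t
          * (\<integral>x. indicator {l..t} x * p x \<partial>lborel)) \<partial>lborel)" (is "?lhs = integral\<^sup>L lborel ?F")
    and "integrable lborel (\<lambda>t. indicator {l..a} t * (derivative_on {l..u} h t
          * (\<integral>x. indicator {l..t} x * p x \<partial>lborel)))"
proof -
  let ?S = "{z :: real \<times> real. snd z \<le> fst z}"
  have "?S \<in> sets borel"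
    by (intro borel_closed closed_Collect_le continuous_intros)
  let ?g = "\<lambda>t. indicator {l..a} t * derivative_on {l..u} h t"
  let ?k = "\<lambda>x. indicator {l..u} x * p x"
  have lhs: "indicator {l..u} x * (max (h a - h x) 0 * p x)
      = (\<integral>t. indicator ?S (t, x) * ?g t \<partial>lborel) * ?k x" for x
  proof (cases "x \<in> {l..u}")
    case True
    have "(\<integral>t. indicator ?S (t, x) * ?g t \<partial>lborel)
        = (\<integral>t. indicator {x..a} t * derivative_on {l..u} h t \<partial>lborel)"
      using True by (intro Bochner_Integration.integral_cong) (auto simp: indicator_def)
    then show ?thesis
      using integral_derivative_on_pos_part[OF C1 mono \<open>l < u\<close> True a] True by simp
  qed simp
  have rhs: "?F t = ?g t * (\<integral>x. indicator ?S (t, x) * ?k x \<partial>lborel)" for t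
  proof (cases "t \<in> {l..a}")
    case True
    then have "(\<integral>x. indicator ?S (t, x) * ?k x \<partial>lborel) = (\<integral>x. indicator {l..t} x * p x \<partial>lborel)"
      using a by (intro Bochner_Integration.integral_cong) (auto simp: indicator_def)
    then show ?thesis
      by simp
  qed simp
  have g_nonneg: "0 \<le> ?g t" for t
    using derivative_on_nonneg[OF C1 mono \<open>l < u\<close>] by simp
  show "?lhs = integral\<^sup>L lborel ?F"
    unfolding lhs rhs using g_nonneg p_nonneg
    by (intro integral_swap_region \<open>?S \<in> sets borel\<close> integrable_indicator_derivative_on[OF C1] p)
      auto
  show "integrable lborel ?F"
    unfolding rhs using p_nonneg
    by (intro integrable_mult_section_integral \<open>?S \<in> sets borel\<close>
        integrable_indicator_derivative_on[OF C1] p) auto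
qed

end

lemma integrable_continuous_mult_indicator:
  fixes q p :: "real \<Rightarrow> real"
  assumes q: "continuous_on {l..u} q" and p: "integrable lborel (\<lambda>x. indicator {l..u} x * p x)"
  shows "integrable lborel (\<lambda>x. indicator {l..u} x * (q x * p x))"
proof -
  obtain M where "\<forall>y \<in> q ` {l..u}. norm y \<le> M"
    using compact_imp_bounded[OF compact_continuous_image[OF q compact_Icc]] bounded_iff by blast
  then have M: "\<And>x. x \<in> {l..u} \<Longrightarrow> \<bar>q x\<bar> \<le> M"
    by auto
  have "(\<lambda>x. indicator {l..u} x *\<^sub>R q x) \<in> borel_measurable borel"
    by (rule borel_measurable_continuous_on_indicator[OF _ q]) simp
  moreover have "(\<lambda>x. indicator {l..u} x * p x) \<in> borel_measurable borel"
    using p by auto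
  ultimately have "(\<lambda>x. (indicator {l..u} x *\<^sub>R q x) * (indicator {l..u} x * p x))
      \<in> borel_measurable lborel"
    by simp
  moreover have "(\<lambda>x. (indicator {l..u} x *\<^sub>R q x) * (indicator {l..u} x * p x))
      = (\<lambda>x. indicator {l..u} x * (q x * p x))"
    by (auto simp: indicator_def fun_eq_iff)
  ultimately have measurable: "(\<lambda>x. indicator {l..u} x * (q x * p x)) \<in> borel_measurable lborel"
    by simp
  have bound: "norm (indicator {l..u} x * (q x * p x)) \<le> norm (M * (indicator {l..u} x * p x))"
    for x
  proof -
    have "\<bar>q x\<bar> * \<bar>p x\<bar> \<le> \<bar>M\<bar> * \<bar>p x\<bar>" if "x \<in> {l..u}"
      using M[OF that] by (intro mult_right_mono) auto
    then show ?thesis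
      by (auto simp: indicator_def abs_mult)
  qed
  show ?thesis
  proof (rule Bochner_Integration.integrable_bound)
    show "integrable lborel (\<lambda>x. M * (indicator {l..u} x * p x))"
      using p by simp
    show "AE x in lborel.
        norm (indicator {l..u} x * (q x * p x)) \<le> norm (M * (indicator {l..u} x * p x))"
      using bound by (rule AE_I2)
  qed (fact measurable)
qed

lemma integral_indicator_weight_mono:
  fixes d k k' :: "real \<Rightarrow> real"
  assumes "integrable lborel (\<lambda>t. indicator {l..u} t * (d t * k t))"
    and "integrable lborel (\<lambda>t. indicator {l..u} t * (d t * k' t))"
    and "\<And>t. 0 \<le> d t" and "\<And>t. t \<in> {l<..<u} \<Longrightarrow> k t \<le> k' t"
  shows "(\<integral>t. indicator {l..u} t * (d t * k t) \<partial>lborel)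
      \<le> (\<integral>t. indicator {l..u} t * (d t * k' t) \<partial>lborel)"
  using assms(1,2)
proof (rule integral_mono_AE)
  show "AE t in lborel. indicator {l..u} t * (d t * k t) \<le> indicator {l..u} t * (d t * k' t)"
    using AE_lborel_singleton[of l] AE_lborel_singleton[of u]
    by eventually_elim (use assms(3,4) in \<open>auto simp: indicator_def intro: mult_left_mono\<close>)
qed

lemma integral_pos_part_at_upper_end_eq_0:
  fixes h :: "real \<Rightarrow> real"
  assumes "mono_on {l..u} h"
  shows "(\<integral>x. indicator {l..u} x * max (h x - h u) 0 \<partial>lborel) = 0"
proof -
  have "(\<lambda>x. indicator {l..u} x * max (h x - h u) 0) = (\<lambda>x. 0)"
    using mono_onD[OF assms, of _ u] by (auto simp: fun_eq_iff indicator_def)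
  then show ?thesis
    by (simp only: integral_zero)
qed

lemma integral_neg_part_at_lower_end_eq_0:
  fixes h :: "real \<Rightarrow> real"
  assumes "mono_on {l..u} h"
  shows "(\<integral>x. indicator {l..u} x * max (h l - h x) 0 \<partial>lborel) = 0"
proof -
  have "(\<lambda>x. indicator {l..u} x * max (h l - h x) 0) = (\<lambda>x. 0)"
    using mono_onD[OF assms, of l] by (auto simp: fun_eq_iff indicator_def)
  then show ?thesis
    by (simp only: integral_zero)
qed

lemma set_integral_abs_le_split:
  fixes h :: "real \<Rightarrow> real"
  assumes h: "continuous_on {l..u} h" and "l \<le> u"
  shows "(\<integral>x\<in>{l..u}. \<bar>h x\<bar> \<partial>lborel) \<le> (u - l) * \<bar>h a\<bar>
      + (\<integral>x. indicator {l..u} x * max (h x - h a) 0 \<partial>lborel)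
      + (\<integral>x. indicator {l..u} x * max (h a - h x) 0 \<partial>lborel)"
proof -
  have integrable: "integrable lborel (\<lambda>x. indicator {l..u} x * q x)"
    if "continuous_on {l..u} q" for q :: "real \<Rightarrow> real"
    using borel_integrable_atLeastAtMost'[OF that] by (simp add: set_integrable_def)
  have "(\<integral>x\<in>{l..u}. \<bar>h x\<bar> \<partial>lborel) = (\<integral>x. indicator {l..u} x * \<bar>h x\<bar> \<partial>lborel)"
    by (simp add: set_lebesgue_integral_def)
  also have "\<dots> \<le> (\<integral>x. indicator {l..u} x * \<bar>h a\<bar>
      + indicator {l..u} x * max (h x - h a) 0 + indicator {l..u} x * max (h a - h x) 0 \<partial>lborel)"
    using h by (intro Bochner_Integration.integral_mono integrable continuous_intros
        Bochner_Integration.integrable_add) (auto simp: indicator_def)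
  also have "\<dots> = (u - l) * \<bar>h a\<bar>
      + (\<integral>x. indicator {l..u} x * max (h x - h a) 0 \<partial>lborel)
      + (\<integral>x. indicator {l..u} x * max (h a - h x) 0 \<partial>lborel)"
    using h \<open>l \<le> u\<close> by (simp add: Bochner_Integration.integral_add integrable continuous_intros)
  finally show ?thesis .
qed

lemma neg_pos_part_lower_bounds:
  fixes C s A1 A2 B1 B2 :: real
  assumes C: "1 < C" and A: "C * A1 \<le> A2" and B: "C * B2 \<le> B1" and "0 \<le> A1" "0 \<le> B2"
  defines "G \<equiv> max (- (s + A1 - B1)) 0 + max (s + A2 - B2) 0"
  shows "(C - 1) * (s + A2) \<le> C * G"
    and "(C - 1) * (B1 - s) \<le> C * G"
    and "(C - 1) * (A2 + B1) \<le> C * G"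
proof -
  have "A1 \<le> A2" "B2 \<le> B1"
    using A B C \<open>0 \<le> A1\<close> \<open>0 \<le> B2\<close> by (smt (verit) mult_le_cancel_right1)+
  have "C * max (- (s + A1 - B1)) 0 \<ge> max (- (s + A1 - B1)) 0"
    "C * max (s + A2 - B2) 0 \<ge> max (s + A2 - B2) 0"
    using C by (simp_all add: mult_le_cancel_right1)
  moreover have "C * max (- (s + A1 - B1)) 0 \<ge> C * (- (s + A1 - B1))"
    "C * max (s + A2 - B2) 0 \<ge> C * (s + A2 - B2)"
    using C by (intro mult_left_mono; simp)+
  ultimately show "(C - 1) * (s + A2) \<le> C * G" "(C - 1) * (B1 - s) \<le> C * G"
    "(C - 1) * (A2 + B1) \<le> C * G"
    using A B \<open>A1 \<le> A2\<close> \<open>B2 \<le> B1\<close> unfolding G_def by (simp_all add: algebra_simps)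
qed

lemma chain_bounds_with_constant:
  fixes I T G c_f c_W C m :: real
  assumes C: "1 < C" and pos: "0 < c_f" "0 < c_W" "0 < m" and "0 \<le> G"
    and lower: "c_f * (C - 1) * I \<le> C * G" and upper: "c_W * m * G \<le> T"
  shows "I \<le> 1 / (c_W * c_f / 2 * m * min ((C - 1) / 2) 1) * T"
proof -
  define \<mu> where "\<mu> = min ((C - 1) / 2) 1"
  have "0 < \<mu>"
    using C by (simp add: \<mu>_def)
  have "\<mu> * C \<le> 2 * (C - 1)"
  proof (cases "(C - 1) / 2 \<le> 1")
    case True
    then have "(C - 1) * C \<le> (C - 1) * 4"
      using C by (intro mult_left_mono) auto
    then show ?thesis
      using True by (simp add: \<mu>_def)
  next
    case False
    then show ?thesis
      by (simp add: \<mu>_def)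
  qed
  define k where "k = c_W * m / 2 * \<mu>"
  have "0 < k"
    using pos \<open>0 < \<mu>\<close> by (simp add: k_def)
  have "(C - 1) * (k * c_f * I) \<le> k * (C * G)"
    using mult_left_mono[OF lower less_imp_le[OF \<open>0 < k\<close>]] by (simp add: ac_simps)
  also have "\<dots> = c_W * m / 2 * G * (\<mu> * C)"
    by (simp add: k_def ac_simps)
  also have "\<dots> \<le> c_W * m / 2 * G * (2 * (C - 1))"
    using \<open>\<mu> * C \<le> 2 * (C - 1)\<close> pos \<open>0 \<le> G\<close> by (intro mult_left_mono) auto
  also have "\<dots> \<le> (C - 1) * T"
    using upper C by (simp add: ac_simps)
  finally have "k * c_f * I \<le> T"
    using C by simp
  then have "I \<le> T / (k * c_f)"
    using \<open>0 < k\<close> pos by (simp add: pos_le_divide_eq ac_simps)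
  then show ?thesis
    by (simp add: k_def \<mu>_def ac_simps)
qed

definition cond_mean :: "(real \<times> real \<Rightarrow> real) \<Rightarrow> (real \<Rightarrow> real) \<Rightarrow> real \<Rightarrow> real" where
  "cond_mean f h w = Top f h w / fW f w"

definition excess_above :: "(real \<times> real \<Rightarrow> real) \<Rightarrow> (real \<Rightarrow> real) \<Rightarrow> real \<Rightarrow> real \<Rightarrow> real" where
  "excess_above f h a w
     = (\<integral>x. indicator {0..1} x * (max (h x - h a) 0 * f (x, w)) \<partial>lborel) / fW f w"

definition excess_below :: "(real \<times> real \<Rightarrow> real) \<Rightarrow> (real \<Rightarrow> real) \<Rightarrow> real \<Rightarrow> real \<Rightarrow> real" where
  "excess_below f h a w
     = (\<integral>x. indicator {0..1} x * (max (h a - h x) 0 * f (x, w)) \<partial>lborel) / fW f w"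

lemma fW_eq_integral: "fW f w = (\<integral>x. indicator {0..1} x * f (x, w) \<partial>lborel)"
  by (simp add: fW_def set_lebesgue_integral_def)

lemma Top_eq_integral: "Top f h w = (\<integral>x. indicator {0..1} x * (h x * f (x, w)) \<partial>lborel)"
  by (simp add: Top_def set_lebesgue_integral_def)

locale cond_density =
  fixes f :: "real \<times> real \<Rightarrow> real"
  assumes density_measurable [measurable]: "f \<in> borel_measurable borel"
    and density_nonneg: "\<And>z. 0 \<le> f z"
    and marginal_pos: "\<And>w. w \<in> {0..1} \<Longrightarrow> 0 < fW f w"
begin

lemma integrable_slice:
  assumes "w \<in> {0..1}"
  shows "integrable lborel (\<lambda>x. indicator {0..1} x * f (x, w))"
proof (rule ccontr)
  assume "\<not> ?thesis"
  then have "fW f w = 0"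
    unfolding fW_eq_integral by (rule not_integrable_integral_eq)
  then show False
    using marginal_pos[OF assms] by simp
qed

lemma excess_above_nonneg: "0 \<le> excess_above f h a w"
  unfolding excess_above_def fW_eq_integral
  by (intro divide_nonneg_nonneg Bochner_Integration.integral_nonneg) (simp_all add: density_nonneg)

lemma excess_below_nonneg: "0 \<le> excess_below f h a w"
  unfolding excess_below_def fW_eq_integral
  by (intro divide_nonneg_nonneg Bochner_Integration.integral_nonneg) (simp_all add: density_nonneg)

lemma cond_mean_split:
  assumes h: "continuous_on {0..1} h" and w: "w \<in> {0..1}"
  shows "cond_mean f h w = h a + excess_above f h a w - excess_below f h a w"
proof -
  let ?p = "\<lambda>x. indicator {0..1} x * f (x, w)"
  let ?above = "\<lambda>x. indicator {0..1} x * (max (h x - h a) 0 * f (x, w))"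
  let ?below = "\<lambda>x. indicator {0..1} x * (max (h a - h x) 0 * f (x, w))"
  have "integrable lborel ?above"
    using h by (intro integrable_continuous_mult_indicator integrable_slice w continuous_intros)
  moreover have "integrable lborel ?below"
    using h by (intro integrable_continuous_mult_indicator integrable_slice w continuous_intros)
  moreover have "Top f h w = (\<integral>x. h a * ?p x + ?above x - ?below x \<partial>lborel)"
    unfolding Top_eq_integral
    by (intro Bochner_Integration.integral_cong) (auto simp: indicator_def max_def algebra_simps)
  ultimately have "Top f h w = h a * fW f w + (\<integral>x. ?above x \<partial>lborel) - (\<integral>x. ?below x \<partial>lborel)"
    using integrable_slice[OF w] by (simp add: fW_eq_integral)
  then show ?thesis
    using marginal_pos[OF w]
    by (simp add: cond_mean_def excess_above_def excess_below_def
        add_divide_distrib diff_divide_distrib)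
qed

lemma one_minus_FXW_eq:
  assumes t: "t \<in> {0..1}" and w: "w \<in> {0..1}"
  shows "1 - FXW f t w = (\<integral>x. indicator {t..1} x * f (x, w) \<partial>lborel) / fW f w"
proof -
  have slice_on: "integrable lborel (\<lambda>x. indicator S x * f (x, w))"
    if "S \<subseteq> {0..1}" "S \<in> sets borel" for S
  proof -
    have "integrable lborel (\<lambda>x. indicator S x *\<^sub>R (indicator {0..1} x * f (x, w)))"
      using that by (intro integrable_mult_indicator integrable_slice w) auto
    moreover have "(\<lambda>x. indicator S x *\<^sub>R (indicator {0..1} x * f (x, w)))
        = (\<lambda>x. indicator S x * f (x, w))"
      using that by (auto simp: fun_eq_iff indicator_def)
    ultimately show ?thesis
      by simp
  qed
  have "(\<integral>x. indicator {0..t} x * f (x, w) \<partial>lborel) + (\<integral>x. indicator {t..1} x * f (x, w) \<partial>lborel)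
      = (\<integral>x. indicator {0..t} x * f (x, w) + indicator {t..1} x * f (x, w) \<partial>lborel)"
    using t by (intro Bochner_Integration.integral_add[symmetric] slice_on) auto
  also have "\<dots> = fW f w"
    unfolding fW_eq_integral
  proof (rule integral_cong_AE)
    show "AE x in lborel. indicator {0..t} x * f (x, w) + indicator {t..1} x * f (x, w)
        = indicator {0..1} x * f (x, w)"
      using AE_lborel_singleton[of t] by eventually_elim (use t in \<open>auto simp: indicator_def\<close>)
  qed (use t in \<open>auto intro: slice_on\<close>)
  finally show ?thesis
    using marginal_pos[OF w]
    by (simp add: FXW_def set_lebesgue_integral_def field_simps)
qed

context
  fixes h :: "real \<Rightarrow> real"
  assumes mono: "mono_on {0..1} h" and C1: "h C1_differentiable_on {0..1}"
begin

lemma excess_above_eq_integral_derivative: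
  assumes a: "a \<in> {0..1}" and w: "w \<in> {0..1}"
  shows "excess_above f h a w
      = (\<integral>t. indicator {a..1} t * (derivative_on {0..1} h t * (1 - FXW f t w)) \<partial>lborel)"
    and "integrable lborel (\<lambda>t. indicator {a..1} t * (derivative_on {0..1} h t * (1 - FXW f t w)))"
proof -
  let ?tail = "\<lambda>t. \<integral>x. indicator {t..1} x * f (x, w) \<partial>lborel"
  note layer_cake = integral_pos_part_eq_integral_derivative_upper_tail
      [OF mono C1 _ density_nonneg integrable_slice[OF w] a]
  have integrand: "indicator {a..1} t * (derivative_on {0..1} h t * (1 - FXW f t w))
      = indicator {a..1} t * (derivative_on {0..1} h t * ?tail t) / fW f w" for t
    using one_minus_FXW_eq[of t w] a w by (cases "t \<in> {a..1}") auto
  show "excess_above f h a w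
      = (\<integral>t. indicator {a..1} t * (derivative_on {0..1} h t * (1 - FXW f t w)) \<partial>lborel)"
    unfolding integrand excess_above_def using layer_cake(1) by simp
  show "integrable lborel (\<lambda>t. indicator {a..1} t * (derivative_on {0..1} h t * (1 - FXW f t w)))"
    unfolding integrand using layer_cake(2) by simp
qed

lemma excess_below_eq_integral_derivative:
  assumes a: "a \<in> {0..1}" and w: "w \<in> {0..1}"
  shows "excess_below f h a w
      = (\<integral>t. indicator {0..a} t * (derivative_on {0..1} h t * FXW f t w) \<partial>lborel)"
    and "integrable lborel (\<lambda>t. indicator {0..a} t * (derivative_on {0..1} h t * FXW f t w))"
proof -
  let ?head = "\<lambda>t. \<integral>x. indicator {0..t} x * f (x, w) \<partial>lborel"
  note layer_cake = integral_neg_part_eq_integral_derivative_lower_tail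
      [OF mono C1 _ density_nonneg integrable_slice[OF w] a]
  have integrand: "indicator {0..a} t * (derivative_on {0..1} h t * FXW f t w)
      = indicator {0..a} t * (derivative_on {0..1} h t * ?head t) / fW f w" for t
    by (simp add: FXW_def set_lebesgue_integral_def)
  show "excess_below f h a w
      = (\<integral>t. indicator {0..a} t * (derivative_on {0..1} h t * FXW f t w) \<partial>lborel)"
    unfolding integrand excess_below_def using layer_cake(1) by simp
  show "integrable lborel (\<lambda>t. indicator {0..a} t * (derivative_on {0..1} h t * FXW f t w))"
    unfolding integrand using layer_cake(2) by simp
qed

end

lemma Top_eq_cond_mean: "w \<in> {0..1} \<Longrightarrow> Top f h w = cond_mean f h w * fW f w"
  using marginal_pos[of w] by (simp add: cond_mean_def)

lemma integrable_abs_Top: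
  assumes h: "continuous_on {0..1} h" and fW_le: "\<And>w. w \<in> {0..1} \<Longrightarrow> fW f w \<le> C_W"
  shows "integrable lborel (\<lambda>w. indicator {0..1} w * \<bar>Top f h w\<bar>)"
proof -
  obtain M where "\<forall>y \<in> h ` {0..1}. norm y \<le> M"
    using compact_imp_bounded[OF compact_continuous_image[OF h compact_Icc]] bounded_iff by blast
  then have M: "\<And>x. x \<in> {0..1} \<Longrightarrow> \<bar>h x\<bar> \<le> M"
    by auto
  then have "0 \<le> M"
    by (metis abs_ge_zero atLeastAtMost_iff order_trans zero_le_one order_refl)
  have [measurable]: "(\<lambda>x. indicator {0..1} x *\<^sub>R h x) \<in> borel_measurable borel"
    by (rule borel_measurable_continuous_on_indicator[OF _ h]) simp
  have [measurable]: "f \<in> borel_measurable (lborel \<Otimes>\<^sub>M lborel)"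
    by (subst lborel_prod) simp
  have "(\<lambda>(w, x). (indicator {0..1} x *\<^sub>R h x) * f (x, w)) \<in> borel_measurable (lborel \<Otimes>\<^sub>M lborel)"
    by measurable
  then have "(\<lambda>w. \<integral>x. (indicator {0..1} x *\<^sub>R h x) * f (x, w) \<partial>lborel) \<in> borel_measurable lborel"
    using lborel.borel_measurable_lebesgue_integral
        [of "\<lambda>w x. (indicator {0..1} x *\<^sub>R h x) * f (x, w)"]
    by simp
  moreover have "Top f h = (\<lambda>w. \<integral>x. (indicator {0..1} x *\<^sub>R h x) * f (x, w) \<partial>lborel)"
    by (simp add: fun_eq_iff Top_eq_integral ac_simps)
  ultimately have Top_measurable [measurable]: "Top f h \<in> borel_measurable lborel"
    by simp
  have Top_bound: "\<bar>Top f h w\<bar> \<le> M * C_W" if w: "w \<in> {0..1}" for w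
  proof -
    have "\<bar>Top f h w\<bar> \<le> (\<integral>x. \<bar>indicator {0..1} x * (h x * f (x, w))\<bar> \<partial>lborel)"
      unfolding Top_eq_integral by (rule integral_abs_bound)
    also have "\<dots> \<le> (\<integral>x. M * (indicator {0..1} x * f (x, w)) \<partial>lborel)"
      using integrable_slice[OF w] M density_nonneg \<open>0 \<le> M\<close>
      by (intro integral_mono_AE' AE_I2) (auto simp: indicator_def abs_mult mult_right_mono)
    also have "\<dots> \<le> M * C_W"
      using fW_le[OF w] \<open>0 \<le> M\<close> by (simp add: fW_eq_integral[symmetric] mult_left_mono)
    finally show ?thesis .
  qed
  show ?thesis
  proof (rule Bochner_Integration.integrable_bound)
    show "integrable lborel (\<lambda>w::real. indicator {0..1} w * (M * C_W))"
      by (intro integrable_mult_left integrable_real_indicator)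
        (simp_all add: emeasure_lborel_Icc_eq)
    show "AE w in lborel.
        norm (indicator {0..1} w * \<bar>Top f h w\<bar>) \<le> norm (indicator {0..1} w * (M * C_W))"
      using Top_bound
      by (intro AE_I2) (auto simp: indicator_def intro: order_trans[OF _ abs_ge_self])
  qed measurable
qed

end

locale monotone_iv = cond_density f for f +
  fixes x1 x2 w1 w2 C_F c_f :: real
  assumes x_order: "0 \<le> x1" "x1 < x2" "x2 \<le> 1"
    and w_order: "0 < w1" "w1 < w2" "w2 < 1"
    and cond_cdf_antimono: "\<And>x w' w''. x \<in> {0<..<1} \<Longrightarrow> w' \<in> {0<..<1} \<Longrightarrow> w'' \<in> {0<..<1}
      \<Longrightarrow> w' \<le> w'' \<Longrightarrow> FXW f x w'' \<le> FXW f x w'"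
    and C_F_gt_1: "1 < C_F"
    and cdf_ratio: "\<And>x. x \<in> {0<..<x2} \<Longrightarrow> C_F * FXW f x w2 \<le> FXW f x w1"
    and survival_ratio: "\<And>x. x \<in> {x1<..<1} \<Longrightarrow> C_F * (1 - FXW f x w1) \<le> 1 - FXW f x w2"
    and c_f_pos: "0 < c_f"
    and cond_density_lower: "\<And>x w. x \<in> {x1..x2} \<Longrightarrow> w \<in> {w1, w2} \<Longrightarrow> c_f \<le> fXW f x w"
begin

lemma w1_in: "w1 \<in> {0..1}" and w2_in: "w2 \<in> {0..1}"
  using w_order by auto

lemma scaled_integral_le_cond_integral:
  assumes w: "w \<in> {w1, w2}" and q: "continuous_on {0..1} q" and q_nonneg: "\<And>x. 0 \<le> q x"
  shows "c_f * (\<integral>x. indicator {x1..x2} x * q x \<partial>lborel)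
      \<le> (\<integral>x. indicator {0..1} x * (q x * f (x, w)) \<partial>lborel) / fW f w"
proof -
  have w01: "w \<in> {0..1}"
    using w w1_in w2_in by auto
  have "(\<integral>x. indicator {x1..x2} x * (c_f * q x) \<partial>lborel)
      \<le> (\<integral>x. indicator {0..1} x * (q x * f (x, w)) / fW f w \<partial>lborel)"
  proof (rule integral_mono_AE')
    show "integrable lborel (\<lambda>x. indicator {0..1} x * (q x * f (x, w)) / fW f w)"
      using integrable_continuous_mult_indicator[OF q integrable_slice[OF w01]] by simp
    show "AE x in lborel.
        indicator {x1..x2} x * (c_f * q x) \<le> indicator {0..1} x * (q x * f (x, w)) / fW f w"
    proof (intro AE_I2)
      fix x
      have "q x * c_f \<le> q x * (f (x, w) / fW f w)" if "x \<in> {x1..x2}"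
        using cond_density_lower[OF that w] q_nonneg[of x]
        by (intro mult_left_mono) (auto simp: fXW_def)
      then show "indicator {x1..x2} x * (c_f * q x)
          \<le> indicator {0..1} x * (q x * f (x, w)) / fW f w"
        using x_order q_nonneg[of x] density_nonneg[of "(x, w)"] marginal_pos[OF w01]
        by (auto simp: indicator_def ac_simps)
    qed
    show "AE x in lborel. 0 \<le> indicator {0..1} x * (q x * f (x, w)) / fW f w"
      using q_nonneg density_nonneg marginal_pos[OF w01] by simp
  qed
  then show ?thesis
    by (simp add: ac_simps)
qed

lemma c_f_interval_length: "c_f * (x2 - x1) \<le> 1"
  using scaled_integral_le_cond_integral[of w2 "\<lambda>_. 1"] x_order marginal_pos[OF w2_in]
  by (simp add: fW_eq_integral)

context
  fixes h :: "real \<Rightarrow> real"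
  assumes mono: "mono_on {0..1} h" and C1: "h C1_differentiable_on {0..1}"
begin

lemma continuous_on_h: "continuous_on {0..1} h"
  using C1 by (rule C1_differentiable_imp_continuous_on)

lemma derivative_nonneg: "0 \<le> derivative_on {0..1} h t"
  using derivative_on_nonneg[OF C1 mono] by simp

lemma cond_mean_mono:
  assumes w': "w' \<in> {0<..<1}" and w'': "w'' \<in> {0<..<1}" and "w' \<le> w''"
  shows "cond_mean f h w' \<le> cond_mean f h w''"
proof -
  have excess_below_0: "excess_below f h 0 w = 0" for w
    using mono_onD[OF mono, of 0]
    by (auto simp: excess_below_def max_def indicator_def
        intro!: Bochner_Integration.integral_eq_zero_AE)
  have "w' \<in> {0..1}" "w'' \<in> {0..1}" "(0::real) \<in> {0..1}"
    using w' w'' by auto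
  note above = excess_above_eq_integral_derivative[OF mono C1 \<open>0 \<in> {0..1}\<close>]
  have "excess_above f h 0 w' \<le> excess_above f h 0 w''"
    unfolding above(1)[OF \<open>w' \<in> {0..1}\<close>] above(1)[OF \<open>w'' \<in> {0..1}\<close>]
    using w' w'' \<open>w' \<le> w''\<close>
    by (intro integral_indicator_weight_mono above(2) \<open>w' \<in> {0..1}\<close> \<open>w'' \<in> {0..1}\<close>
        derivative_nonneg diff_left_mono cond_cdf_antimono) auto
  then show ?thesis
    using cond_mean_split[OF continuous_on_h, of _ 0] excess_below_0 w' w''
    by simp
qed

lemma excess_above_ratio:
  assumes a: "a \<in> {x1..x2}"
  shows "C_F * excess_above f h a w1 \<le> excess_above f h a w2"
proof -
  have "a \<in> {0..1}"
    using a x_order by auto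
  note above = excess_above_eq_integral_derivative[OF mono C1 \<open>a \<in> {0..1}\<close>]
  have "C_F * excess_above f h a w1
      = (\<integral>t. indicator {a..1} t * (derivative_on {0..1} h t * (C_F * (1 - FXW f t w1))) \<partial>lborel)"
    by (simp add: above(1)[OF w1_in] ac_simps)
  also have "\<dots> \<le> excess_above f h a w2"
    unfolding above(1)[OF w2_in] using above(2)[OF w1_in] a
    by (intro integral_indicator_weight_mono above(2) w2_in derivative_nonneg survival_ratio)
      (auto simp: ac_simps)
  finally show ?thesis .
qed

lemma excess_below_ratio:
  assumes a: "a \<in> {x1..x2}"
  shows "C_F * excess_below f h a w2 \<le> excess_below f h a w1"
proof -
  have "a \<in> {0..1}"
    using a x_order by auto
  note below = excess_below_eq_integral_derivative[OF mono C1 \<open>a \<in> {0..1}\<close>]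
  have "C_F * excess_below f h a w2
      = (\<integral>t. indicator {0..a} t * (derivative_on {0..1} h t * (C_F * FXW f t w2)) \<partial>lborel)"
    by (simp add: below(1)[OF w2_in] ac_simps)
  also have "\<dots> \<le> excess_below f h a w1"
    unfolding below(1)[OF w1_in] using below(2)[OF w2_in] a
    by (intro integral_indicator_weight_mono below(2) w1_in derivative_nonneg cdf_ratio)
      (auto simp: ac_simps)
  finally show ?thesis .
qed

lemma excess_above_ge:
  "c_f * (\<integral>x. indicator {x1..x2} x * max (h x - h a) 0 \<partial>lborel) \<le> excess_above f h a w2"
  unfolding excess_above_def using continuous_on_h
  by (intro scaled_integral_le_cond_integral continuous_intros) auto

lemma excess_below_ge:
  "c_f * (\<integral>x. indicator {x1..x2} x * max (h a - h x) 0 \<partial>lborel) \<le> excess_below f h a w1"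
  unfolding excess_below_def using continuous_on_h
  by (intro scaled_integral_le_cond_integral continuous_intros) auto

lemma cond_mean_tails_bounds:
  assumes a: "a \<in> {x1..x2}"
  defines "G \<equiv> max (- cond_mean f h w1) 0 + max (cond_mean f h w2) 0"
  shows "(C_F - 1) * (h a + excess_above f h a w2) \<le> C_F * G"
    and "(C_F - 1) * (excess_below f h a w1 - h a) \<le> C_F * G"
    and "(C_F - 1) * (excess_above f h a w2 + excess_below f h a w1) \<le> C_F * G"
  using neg_pos_part_lower_bounds[OF C_F_gt_1 excess_above_ratio[OF a] excess_below_ratio[OF a]
      excess_above_nonneg excess_below_nonneg, of "h a"]
    cond_mean_split[OF continuous_on_h w1_in, of a]
    cond_mean_split[OF continuous_on_h w2_in, of a]
  unfolding G_def by simp_all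

text \<open>The reference point \<open>a\<close> is a zero of \<open>h\<close> in \<open>[x1, x2]\<close>, or the endpoint where \<open>|h|\<close> is
  smallest if \<open>h\<close> has constant sign there.\<close>

lemma integral_abs_le_cond_mean_tails:
  "c_f * (C_F - 1) * (\<integral>x\<in>{x1..x2}. \<bar>h x\<bar> \<partial>lborel)
     \<le> C_F * (max (- cond_mean f h w1) 0 + max (cond_mean f h w2) 0)"
proof -
  let ?I = "\<integral>x\<in>{x1..x2}. \<bar>h x\<bar> \<partial>lborel"
  have h_x: "continuous_on {x1..x2} h" "mono_on {x1..x2} h"
    using x_order by (auto intro: continuous_on_subset[OF continuous_on_h]
        mono_on_subset[OF mono])
  note split = set_integral_abs_le_split[OF h_x(1) less_imp_le[OF x_order(2)]]
  have ends: "x1 \<in> {x1..x2}" "x2 \<in> {x1..x2}"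
    using x_order by auto
  have scale: "c_f * (C_F - 1) * ?I \<le> C_F * (max (- cond_mean f h w1) 0 + max (cond_mean f h w2) 0)"
    if "c_f * ?I \<le> K"
      and "(C_F - 1) * K \<le> C_F * (max (- cond_mean f h w1) 0 + max (cond_mean f h w2) 0)"
    for K
  proof -
    have "(C_F - 1) * (c_f * ?I) \<le> (C_F - 1) * K"
      using that(1) C_F_gt_1 by (intro mult_left_mono) auto
    then show ?thesis
      using that(2) by (simp add: ac_simps)
  qed
  consider (nonneg) "0 \<le> h x1" | (nonpos) "h x2 \<le> 0" | (root) a where "a \<in> {x1..x2}" "h a = 0"
    using IVT'[of h x1 0 x2] h_x(1) x_order by force
  then show ?thesis
  proof cases
    case nonneg
    have "c_f * ?I \<le> c_f * (x2 - x1) * h x1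
        + c_f * (\<integral>x. indicator {x1..x2} x * max (h x - h x1) 0 \<partial>lborel)"
      using mult_left_mono[OF split[of x1] less_imp_le[OF c_f_pos]] nonneg
        integral_neg_part_at_lower_end_eq_0[OF h_x(2)] by (simp add: algebra_simps)
    also have "\<dots> \<le> h x1 + excess_above f h x1 w2"
      using mult_right_mono[OF c_f_interval_length nonneg] excess_above_ge[of x1] by simp
    finally show ?thesis
      using cond_mean_tails_bounds(1)[OF ends(1)] by (rule scale)
  next
    case nonpos
    have "c_f * ?I \<le> c_f * (x2 - x1) * (- h x2)
        + c_f * (\<integral>x. indicator {x1..x2} x * max (h x2 - h x) 0 \<partial>lborel)"
      using mult_left_mono[OF split[of x2] less_imp_le[OF c_f_pos]] nonpos
        integral_pos_part_at_upper_end_eq_0[OF h_x(2)] by (simp add: algebra_simps)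
    also have "\<dots> \<le> excess_below f h x2 w1 - h x2"
      using mult_right_mono[OF c_f_interval_length, of "- h x2"] nonpos excess_below_ge[of x2]
      by simp
    finally show ?thesis
      using cond_mean_tails_bounds(2)[OF ends(2)] by (rule scale)
  next
    case root
    have "c_f * ?I \<le> c_f * (\<integral>x. indicator {x1..x2} x * max (h x - h a) 0 \<partial>lborel)
        + c_f * (\<integral>x. indicator {x1..x2} x * max (h a - h x) 0 \<partial>lborel)"
      using mult_left_mono[OF split[of a] less_imp_le[OF c_f_pos]] root by (simp add: algebra_simps)
    also have "\<dots> \<le> excess_above f h a w2 + excess_below f h a w1"
      using excess_above_ge[of a] excess_below_ge[of a] by simp
    finally show ?thesis
      using cond_mean_tails_bounds(3)[OF root(1)] by (rule scale)
  qed
qed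

lemma integral_abs_Top_ge:
  assumes "0 \<le> c_W" and fW_bounds: "\<And>w. w \<in> {0..1} \<Longrightarrow> c_W \<le> fW f w \<and> fW f w \<le> C_W"
  shows "c_W * min (1 - w2) w1 * (max (- cond_mean f h w1) 0 + max (cond_mean f h w2) 0)
      \<le> (\<integral>w\<in>{0..1}. \<bar>Top f h w\<bar> \<partial>lborel)"
proof -
  let ?g = "cond_mean f h"
  let ?N = "max (- ?g w1) 0" and ?P = "max (?g w2) 0"
  have abs_Top: "c_W * \<bar>?g w\<bar> \<le> \<bar>Top f h w\<bar>" if "w \<in> {0..1}" for w
  proof -
    have "c_W * \<bar>?g w\<bar> \<le> fW f w * \<bar>?g w\<bar>"
      using fW_bounds[OF that] by (intro mult_right_mono) auto
    then show ?thesis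
      using Top_eq_cond_mean[OF that] marginal_pos[OF that] by (simp add: abs_mult mult.commute)
  qed
  have pointwise: "indicator {0<..w1} w * (c_W * ?N) + indicator {w2..<1} w * (c_W * ?P)
      \<le> indicator {0..1} w * \<bar>Top f h w\<bar>" for w
  proof -
    have "c_W * ?N \<le> \<bar>Top f h w\<bar>" if "w \<in> {0<..w1}"
    proof -
      have "?g w \<le> ?g w1"
        using that w_order by (intro cond_mean_mono) auto
      then have "c_W * ?N \<le> c_W * \<bar>?g w\<bar>"
        using \<open>0 \<le> c_W\<close> by (intro mult_left_mono) linarith+
      also have "\<dots> \<le> \<bar>Top f h w\<bar>"
        using abs_Top that w_order by auto
      finally show ?thesis .
    qed
    moreover have "c_W * ?P \<le> \<bar>Top f h w\<bar>" if "w \<in> {w2..<1}"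
    proof -
      have "?g w2 \<le> ?g w"
        using that w_order by (intro cond_mean_mono) auto
      then have "c_W * ?P \<le> c_W * \<bar>?g w\<bar>"
        using \<open>0 \<le> c_W\<close> by (intro mult_left_mono) linarith+
      also have "\<dots> \<le> \<bar>Top f h w\<bar>"
        using abs_Top that w_order by auto
      finally show ?thesis .
    qed
    ultimately show ?thesis
      using w_order by (auto simp: indicator_def)
  qed
  have "min (1 - w2) w1 * ?N \<le> w1 * ?N" "min (1 - w2) w1 * ?P \<le> (1 - w2) * ?P"
    by (intro mult_right_mono; simp)+
  then have "c_W * (min (1 - w2) w1 * (?N + ?P)) \<le> c_W * (w1 * ?N + (1 - w2) * ?P)"
    using \<open>0 \<le> c_W\<close> by (intro mult_left_mono) (auto simp: distrib_left)
  then have "c_W * min (1 - w2) w1 * (?N + ?P) \<le> c_W * ?N * w1 + c_W * ?P * (1 - w2)"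
    by (simp add: algebra_simps)
  also have "\<dots>
      = (\<integral>w. indicator {0<..w1} w * (c_W * ?N) + indicator {w2..<1} w * (c_W * ?P) \<partial>lborel)"
    using w_order
    by (subst Bochner_Integration.integral_add) (auto simp: integrable_real_mult_indicator)
  also have "\<dots> \<le> (\<integral>w. indicator {0..1} w * \<bar>Top f h w\<bar> \<partial>lborel)"
    using pointwise integrable_abs_Top[OF continuous_on_h] fW_bounds
    by (intro integral_mono_AE') auto
  finally show ?thesis
    by (simp add: set_lebesgue_integral_def)
qed

theorem integral_abs_le_integral_abs_Top:
  assumes "0 < c_W" and "\<And>w. w \<in> {0..1} \<Longrightarrow> c_W \<le> fW f w \<and> fW f w \<le> C_W"
  shows "(\<integral>x\<in>{x1..x2}. \<bar>h x\<bar> \<partial>lborel)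
      \<le> 1 / (c_W * c_f / 2 * min (1 - w2) w1 * min ((C_F - 1) / 2) 1)
        * (\<integral>w\<in>{0..1}. \<bar>Top f h w\<bar> \<partial>lborel)"
proof (rule chain_bounds_with_constant[OF C_F_gt_1 c_f_pos \<open>0 < c_W\<close>])
  show "0 < min (1 - w2) w1"
    using w_order by simp
  show "c_W * min (1 - w2) w1 * (max (- cond_mean f h w1) 0 + max (cond_mean f h w2) 0)
      \<le> (\<integral>w\<in>{0..1}. \<bar>Top f h w\<bar> \<partial>lborel)"
    using assms by (intro integral_abs_Top_ge) auto
qed (simp_all add: integral_abs_le_cond_mean_tails)

end

end

theorem mainTheorem3:
  fixes f :: "real \<times> real \<Rightarrow> real"
    and x1 x1t x2t x2 w1 w2 C_F C_T c_f c_W C_W :: real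
    and h :: "real \<Rightarrow> real"
  assumes order: "0 \<le> x1" "x1 < x1t" "x1t < x2t" "x2t < x2" "x2 \<le> 1" "0 < w1" "w1 < w2" "w2 < 1"
    and dens_meas: "f \<in> borel_measurable borel"
    and dens_nonneg: "\<And>p. f p \<ge> 0"
    and dens_int: "set_integrable lborel ({0..1} \<times> {0..1}) f"
    and dens_one: "(\<integral>p\<in>{0..1} \<times> {0..1}. f p \<partial>lborel) = 1"
    and A1a: "\<And>x w' w''. x \<in> {0<..<1} \<Longrightarrow> w' \<in> {0<..<1} \<Longrightarrow> w'' \<in> {0<..<1} \<Longrightarrow> w' \<le> w''
               \<Longrightarrow> FXW f x w' \<ge> FXW f x w''"
    and CF: "C_F > 1"
    and A1b1: "\<And>x. x \<in> {0<..<x2} \<Longrightarrow> FXW f x w1 \<ge> C_F * FXW f x w2"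
    and A1b2: "\<And>x. x \<in> {x1<..<1} \<Longrightarrow> C_F * (1 - FXW f x w1) \<le> 1 - FXW f x w2"
    and A2i: "set_integrable lborel ({0..1} \<times> {0..1}) (\<lambda>p. (f p)\<^sup>2)"
             "(\<integral>p\<in>{0..1} \<times> {0..1}. (f p)\<^sup>2 \<partial>lborel) \<le> C_T"
    and A2ii: "c_f > 0" "\<And>x w. x \<in> {x1..x2} \<Longrightarrow> w \<in> {w1, w2} \<Longrightarrow> fXW f x w \<ge> c_f"
    and A2iii: "0 < c_W" "c_W \<le> C_W" "\<And>w. w \<in> {0..1} \<Longrightarrow> c_W \<le> fW f w \<and> fW f w \<le> C_W"
    and h_mono: "mono_on {0..1} h"
    and h_C1: "h C1_differentiable_on {0..1}"
  shows "(\<integral>x\<in>{x1..x2}. \<bar>h x\<bar> \<partial>lborel)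
         \<le> (1 / (c_W * c_f / 2 * min (1 - w2) w1 * min ((C_F - 1) / 2) 1))
            * (\<integral>w\<in>{0..1}. \<bar>Top f h w\<bar> \<partial>lborel)"
proof -
  have "0 < fW f w" if "w \<in> {0..1}" for w
    using A2iii(1) A2iii(3)[OF that] by linarith
  then have "monotone_iv f x1 x2 w1 w2 C_F c_f"
    by unfold_locales
      (rule dens_meas dens_nonneg A1a CF A1b1 A1b2 A2ii | assumption | use order in linarith)+
  then show ?thesis
    using h_mono h_C1 A2iii(1,3) by (rule monotone_iv.integral_abs_le_integral_abs_Top)
qed

end
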